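(* Let $q$ be a prime power, $V$ an $n$-dimensional $\mathbb{F}_q$-vector space and $k\ge1$. The simplicial complex $\Delta(V^*,k)$ is a matroid complex.
   Context: Let $\mathcal{L}$ be the set of lines (1-dimensional subspaces) of $V^*$. $\Delta(V^*,k)$ is the simplicial complex on the vertex set $\mathcal{L}\sqcup\cdots\sqcup\mathcal{L}$ ($k$ disjoint copies) whose faces are the sets $(\mathcal{L}\setminus F_1)\sqcup\cdots\sqcup(\mathcal{L}\setminus F_k)$ with $F_1,\dots,F_k\subseteq\mathcal{L}$ such that $F_1\cup\cdots\cup F_k$ linearly spans $V^*$. A matroid complex is a simplicial complex satisfying the exchange property: if $F,G$ are faces with $|F|<|G|$, there is $v\in G\setminus F$ with $F\cup\{v\}$ a face. *)

theory Defs
  imports "HOL-Analysis.Analysis"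
begin

text \<open>The dual space V* of an n-dimensional F_q-space is modelled (via the canonical
identification V* = F_q^n) as the coordinate space 'a^'n with 'a a finite field.\<close>

definition lines :: "('a::{finite,field} ^ 'n) set set" where
  "lines = {L. vec.subspace L \<and> vec.dim L = 1}"

definition Delta_vertices :: "nat \<Rightarrow> (('a::{finite,field} ^ 'n) set \<times> nat) set" where
  "Delta_vertices k = lines \<times> {..<k}"

definition Delta_faces :: "nat \<Rightarrow> (('a::{finite,field} ^ 'n) set \<times> nat) set set" where
  "Delta_faces k =
     {{(L, i). L \<in> lines \<and> i < k \<and> L \<notin> F i} | F.
        (\<forall>i<k. F i \<subseteq> lines) \<and>
        vec.span (\<Union> (\<Union>i<k. F i)) = (UNIV :: ('a ^ 'n) set)}"

definition simplicial_complex :: "'v set \<Rightarrow> 'v set set \<Rightarrow> bool" where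
  "simplicial_complex X \<Delta> \<longleftrightarrow>
     \<Delta> \<noteq> {} \<and> (\<forall>F\<in>\<Delta>. F \<subseteq> X) \<and> (\<forall>F\<in>\<Delta>. \<forall>G. G \<subseteq> F \<longrightarrow> G \<in> \<Delta>)"

definition matroid_complex :: "'v set \<Rightarrow> 'v set set \<Rightarrow> bool" where
  "matroid_complex X \<Delta> \<longleftrightarrow> simplicial_complex X \<Delta> \<and>
     (\<forall>F\<in>\<Delta>. \<forall>G\<in>\<Delta>. card F < card G \<longrightarrow> (\<exists>v\<in>G - F. insert v F \<in> \<Delta>))"

end

theory Submission
  imports Defs
begin

text \<open>The faces of \<Delta>(V*,k) are the complements of the spanning sets of the matroid
represented by k copies of every line of V*, so \<Delta>(V*,k) is the independence complex of
the dual matroid. Exchange is a dimension count: let A, B be faces with card A < card B and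
T = E - (A \<union> B). If no c \<in> B - A can be added to A, each such c is a coloop of the
spanning set E - A = T \<union> (B - A), so dim V* = dim T + card (B - A). But E - B =
T \<union> (A - B) spans too, and each line adds at most one dimension, so
dim V* \<le> dim T + card (A - B) < dim T + card (B - A).\<close>

lemma lines_iff_span_singleton:
  "L \<in> (lines :: ('a::{finite,field} ^ 'n) set set) \<longleftrightarrow> (\<exists>x. x \<noteq> 0 \<and> L = vec.span {x})"
proof
  assume "L \<in> lines"
  then have L: "vec.subspace L" "vec.dim L = 1" by (auto simp: lines_def)
  obtain B where B: "B \<subseteq> L" "vec.independent B" "L \<subseteq> vec.span B" "card B = 1"
    using vec.basis_exists[of L] L(2) by metis
  then obtain x where "B = {x}" by (blast elim: card_1_singletonE)
  with B L(1) have "x \<noteq> 0" "L = vec.span {x}"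
    using vec.dependent_zero vec.span_subspace[of "{x}" L] by auto
  then show "\<exists>x. x \<noteq> 0 \<and> L = vec.span {x}" by blast
next
  assume "\<exists>x. x \<noteq> 0 \<and> L = vec.span {x}"
  then show "L \<in> lines" by (auto simp: lines_def vec.subspace_span)
qed

lemma finite_lines: "finite (lines :: ('a::{finite,field} ^ 'n) set set)"
  by (rule finite_subset[of _ "Pow UNIV"]) auto

lemma span_Union_lines: "vec.span (\<Union> (lines :: ('a::{finite,field} ^ 'n) set set)) = UNIV"
proof -
  have "v \<in> \<Union> lines" if "v \<noteq> 0" for v :: "'a ^ 'n"
  proof -
    have "vec.span {v} \<in> lines" using that by (auto simp: lines_iff_span_singleton)
    then show ?thesis using vec.span_base[of v "{v}"] by blast
  qed
  then have "UNIV - {0} \<subseteq> vec.span (\<Union> (lines :: ('a ^ 'n) set set))"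
    using vec.span_base by blast
  then show ?thesis using vec.span_zero by blast
qed

lemma dim_line_Un:
  assumes "L \<in> lines"
  shows "vec.dim (L \<union> X) = (if L \<subseteq> vec.span X then vec.dim X else vec.dim X + 1)"
proof -
  obtain x where L: "L = vec.span {x}" using assms by (auto simp: lines_iff_span_singleton)
  have "vec.span (L \<union> X) = vec.span (insert x X)"
    unfolding L vec.span_eq using vec.span_superset vec.span_mono[of "{x}" "insert x X"]
    by (auto intro: vec.span_base)
  then have "vec.dim (L \<union> X) = vec.dim (insert x X)" by (rule vec.span_eq_dim)
  moreover have "L \<subseteq> vec.span X \<longleftrightarrow> x \<in> vec.span X"
    unfolding L using vec.span_base[of x "{x}"] vec.span_minimal[OF _ vec.subspace_span] by blast
  ultimately show ?thesis by (simp add: vec.dim_insert)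
qed

lemma dim_Union_lines_Un_le:
  assumes "finite D" "f ` D \<subseteq> lines"
  shows "vec.dim (\<Union> (f ` (T \<union> D))) \<le> vec.dim (\<Union> (f ` T)) + card D"
  using assms
proof (induction D rule: finite_induct)
  case (insert c D)
  have "\<Union> (f ` (T \<union> insert c D)) = f c \<union> \<Union> (f ` (T \<union> D))" by auto
  then show ?case using insert dim_line_Un[of "f c" "\<Union> (f ` (T \<union> D))"] by auto
qed simp

lemma dim_Union_lines_Un_coloops:
  assumes "finite D" "f ` D \<subseteq> lines" "T \<inter> D = {}"
    and "\<forall>c\<in>D. \<not> f c \<subseteq> vec.span (\<Union> (f ` ((T \<union> D) - {c})))"
  shows "vec.dim (\<Union> (f ` (T \<union> D))) = vec.dim (\<Union> (f ` T)) + card D"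
  using assms
proof (induction D rule: finite_induct)
  case (insert c D)
  have "\<forall>d\<in>D. \<not> f d \<subseteq> vec.span (\<Union> (f ` ((T \<union> D) - {d})))"
  proof
    fix d assume "d \<in> D"
    have "vec.span (\<Union> (f ` ((T \<union> D) - {d}))) \<subseteq> vec.span (\<Union> (f ` ((T \<union> insert c D) - {d})))"
      by (intro vec.span_mono) auto
    then show "\<not> f d \<subseteq> vec.span (\<Union> (f ` ((T \<union> D) - {d})))"
      using insert.prems(3) \<open>d \<in> D\<close> by blast
  qed
  moreover have "(T \<union> insert c D) - {c} = T \<union> D" using insert by auto
  moreover have "\<Union> (f ` (T \<union> insert c D)) = f c \<union> \<Union> (f ` (T \<union> D))" by auto
  ultimately show ?case using insert dim_line_Un[of "f c" "\<Union> (f ` (T \<union> D))"] by auto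
qed simp

definition spanning_complements ::
    "('v \<Rightarrow> ('a::field ^ 'n) set) \<Rightarrow> 'v set \<Rightarrow> 'v set set" where
  "spanning_complements f E = {A. A \<subseteq> E \<and> vec.span (\<Union> (f ` (E - A))) = UNIV}"

lemma spanning_complements_subset:
  assumes "A \<in> spanning_complements f E" "B \<subseteq> A"
  shows "B \<in> spanning_complements f E"
proof -
  from assms(1) have "A \<subseteq> E" and spans: "vec.span (\<Union> (f ` (E - A))) = UNIV"
    by (simp_all add: spanning_complements_def)
  have "vec.span (\<Union> (f ` (E - A))) \<subseteq> vec.span (\<Union> (f ` (E - B)))"
    using assms(2) by (intro vec.span_mono) auto
  then have "vec.span (\<Union> (f ` (E - B))) = UNIV" by (simp add: spans top_le)
  moreover have "B \<subseteq> E" using \<open>A \<subseteq> E\<close> assms(2) by blast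
  ultimately show ?thesis by (simp only: spanning_complements_def mem_Collect_eq)
qed

lemma spanning_complements_insert:
  assumes "A \<in> spanning_complements f E" "c \<in> E"
    and "f c \<subseteq> vec.span (\<Union> (f ` (E - insert c A)))"
  shows "insert c A \<in> spanning_complements f E"
proof -
  from assms(1) have "A \<subseteq> E" and spans: "vec.span (\<Union> (f ` (E - A))) = UNIV"
    by (simp_all add: spanning_complements_def)
  let ?S = "vec.span (\<Union> (f ` (E - insert c A)))"
  have "\<Union> (f ` (E - A)) \<subseteq> f c \<union> \<Union> (f ` (E - insert c A))" by auto
  also have "\<dots> \<subseteq> ?S" by (rule Un_least[OF assms(3) vec.span_superset])
  finally have "vec.span (\<Union> (f ` (E - A))) \<subseteq> ?S"
    by (simp add: vec.span_minimal vec.subspace_span)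
  then have "?S = UNIV" by (simp add: spans top_le)
  moreover have "insert c A \<subseteq> E" using \<open>A \<subseteq> E\<close> assms(2) by blast
  ultimately show ?thesis by (simp only: spanning_complements_def mem_Collect_eq)
qed

lemma dim_UNIV_eq_if_span_UNIV:
  fixes X :: "('a::field ^ 'n) set"
  shows "vec.span X = UNIV \<Longrightarrow> vec.dim (UNIV :: ('a ^ 'n) set) = vec.dim X"
  using vec.dim_span[of X] by simp

lemma spanning_complements_exchange:
  fixes f :: "'v \<Rightarrow> ('a::{finite,field} ^ 'n) set"
  assumes "finite E" "f ` E \<subseteq> lines"
    and A: "A \<in> spanning_complements f E" and B: "B \<in> spanning_complements f E"
    and "card A < card B"
  shows "\<exists>c\<in>B - A. insert c A \<in> spanning_complements f E"
proof (rule ccontr)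
  assume no_exchange: "\<not> ?thesis"
  have AE: "A \<subseteq> E" and BE: "B \<subseteq> E"
    and spans_A: "vec.span (\<Union> (f ` (E - A))) = UNIV"
    and spans_B: "vec.span (\<Union> (f ` (E - B))) = UNIV"
    using A B by (simp_all add: spanning_complements_def)
  have coloops: "\<forall>c\<in>B - A. \<not> f c \<subseteq> vec.span (\<Union> (f ` (E - insert c A)))"
  proof
    fix c assume c: "c \<in> B - A"
    with BE have "c \<in> E" by blast
    with c no_exchange show "\<not> f c \<subseteq> vec.span (\<Union> (f ` (E - insert c A)))"
      using spanning_complements_insert[OF A] by blast
  qed
  have fin: "finite A" "finite B" using AE BE assms(1) finite_subset by auto
  define T where "T = E - A - B"
  have TBA: "T \<union> (B - A) = E - A" using BE by (auto simp: T_def)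
  have TAB: "T \<union> (A - B) = E - B" using AE by (auto simp: T_def)
  have "vec.dim (UNIV :: ('a ^ 'n) set) = vec.dim (\<Union> (f ` (T \<union> (B - A))))"
    unfolding TBA using spans_A by (rule dim_UNIV_eq_if_span_UNIV)
  also have "\<dots> = vec.dim (\<Union> (f ` T)) + card (B - A)"
  proof (rule dim_Union_lines_Un_coloops)
    have "(T \<union> (B - A)) - {c} = E - insert c A" for c using TBA by blast
    then show "\<forall>c\<in>B - A. \<not> f c \<subseteq> vec.span (\<Union> (f ` ((T \<union> (B - A)) - {c})))"
      using coloops by (simp only:)
    show "finite (B - A)" using fin by simp
    show "f ` (B - A) \<subseteq> lines" using BE assms(2) by blast
    show "T \<inter> (B - A) = {}" by (auto simp: T_def)
  qed
  finally have "vec.dim (UNIV :: ('a ^ 'n) set) = vec.dim (\<Union> (f ` T)) + card (B - A)" .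
  moreover have "vec.dim (UNIV :: ('a ^ 'n) set) = vec.dim (\<Union> (f ` (T \<union> (A - B))))"
    unfolding TAB using spans_B by (rule dim_UNIV_eq_if_span_UNIV)
  moreover have "vec.dim (\<Union> (f ` (T \<union> (A - B)))) \<le> vec.dim (\<Union> (f ` T)) + card (A - B)"
    using fin AE assms(2) by (intro dim_Union_lines_Un_le) auto
  moreover have "card (A - B) < card (B - A)"
    using fin assms(5) by (rule card_less_sym_Diff)
  ultimately show False by linarith
qed

theorem matroid_complex_spanning_complements:
  fixes f :: "'v \<Rightarrow> ('a::{finite,field} ^ 'n) set"
  assumes "finite E" "f ` E \<subseteq> lines" "vec.span (\<Union> (f ` E)) = UNIV"
  shows "matroid_complex E (spanning_complements f E)"
  unfolding matroid_complex_def simplicial_complex_def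
proof (intro conjI ballI allI impI)
  show "spanning_complements f E \<noteq> {}"
    using assms(3) by (auto simp: spanning_complements_def)
  show "A \<subseteq> E" if "A \<in> spanning_complements f E" for A
    using that by (simp add: spanning_complements_def)
qed (simp_all add: spanning_complements_subset spanning_complements_exchange[OF assms(1,2)])

lemma Delta_faces_eq_spanning_complements:
  "Delta_faces k =
     spanning_complements fst (Delta_vertices k :: (('a::{finite,field} ^ 'n) set \<times> nat) set)"
proof (intro set_eqI iffI)
  fix G :: "(('a ^ 'n) set \<times> nat) set" assume "G \<in> Delta_faces k"
  then obtain F where F: "G = {(L, i). L \<in> lines \<and> i < k \<and> L \<notin> F i}"
    "\<forall>i<k. F i \<subseteq> lines" "vec.span (\<Union> (\<Union>i<k. F i)) = (UNIV :: ('a ^ 'n) set)"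
    unfolding Delta_faces_def by blast
  have "\<Union> (fst ` (Delta_vertices k - G)) = \<Union> (\<Union>i<k. F i)"
    using F(2) unfolding F(1) Delta_vertices_def by force
  then show "G \<in> spanning_complements fst (Delta_vertices k)"
    using F by (auto simp: spanning_complements_def Delta_vertices_def)
next
  fix G :: "(('a ^ 'n) set \<times> nat) set"
  assume G: "G \<in> spanning_complements fst (Delta_vertices k)"
  define F where "F i = {L \<in> lines. (L, i) \<notin> G}" for i
  have "G = {(L, i). L \<in> lines \<and> i < k \<and> L \<notin> F i}"
    using G by (auto simp: F_def Delta_vertices_def spanning_complements_def)
  moreover have "\<Union> (fst ` (Delta_vertices k - G)) = \<Union> (\<Union>i<k. F i)"
    unfolding F_def Delta_vertices_def by force
  ultimately show "G \<in> Delta_faces k"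
    using G unfolding Delta_faces_def spanning_complements_def
    by (intro CollectI exI[of _ F]) (auto simp: F_def)
qed

lemma fst_image_Delta_vertices:
  "k \<ge> 1 \<Longrightarrow> fst ` Delta_vertices k = (lines :: ('a::{finite,field} ^ 'n) set set)"
  by (simp add: Delta_vertices_def fst_image_times lessThan_empty_iff)

theorem lemma3p2:
  fixes k :: nat
  assumes "k \<ge> 1"
  shows "matroid_complex (Delta_vertices k :: (('a::{finite,field} ^ 'n) set \<times> nat) set)
           (Delta_faces k)"
  unfolding Delta_faces_eq_spanning_complements
proof (rule matroid_complex_spanning_complements)
  show "finite (Delta_vertices k :: (('a ^ 'n) set \<times> nat) set)"
    by (simp add: Delta_vertices_def finite_lines)
qed (simp_all add: fst_image_Delta_vertices[OF assms] span_Union_lines)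

end
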